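(* Let $\alpha_1=\sqrt{-106+34\sqrt{19}}$, $\alpha_2=-10+10\sqrt{19}$, $\alpha_3=16-16\sqrt{19}$, $\alpha_4=-13+3\sqrt{19}$, $\alpha_5=\sqrt{-77798+1162\sqrt{4691}}$, $\alpha_6=-\frac{354}{5}+\frac{6\sqrt{4691}}{5}$, $\alpha_7=-\frac{2183}{35}+\frac{27}{35}\sqrt{4691}$. Each of the following systems has an isochronous center at the origin $O$ with zero Urabe function (in systems with $\pm,\mp$, upper signs throughout or lower signs throughout): (i) $\dot x=-y+(-2+2\sqrt{19})x^2y+x^2-(-2+2\sqrt{19})x^4$, $\dot y=x\pm\alpha_1y^2-2xy\mp\frac{\alpha_1}{2}x^2+\alpha_2xy^2\mp2\alpha_1x^2y+\alpha_4x^3+\alpha_3x^3y\pm4\alpha_1x^4$; (ii) for every $a\in\mathbb R$: $\dot x=-y+axy+\frac{15}{8}a^2x^2y+x^2-ax^3-\frac{15}{8}a^2x^4$, $\dot y=x-\frac a2y^2-2xy+\frac{3a}{4}x^2+\frac{15}{4}a^2xy^2+3ax^2y+2x^3-\frac{15}{4}a^2x^3y-\frac{5a}{2}x^4$; (iii) $\dot x=-y\mp\frac{2}{35}\alpha_5xy+\alpha_6x^2y+x^2\pm\frac2{35}\alpha_5x^3-\alpha_6x^4$, $\dot y=x\pm\frac{\alpha_5}{35}y^2-2xy\mp\frac3{70}\alpha_5x^2+5\alpha_6xy^2\mp\frac6{35}\alpha_5x^2y+\alpha_7x^3-8\alpha_6x^3y\pm\frac{38}{35}\alpha_5x^4$.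
   Context: For a real planar polynomial system $\dot x=-y+A(x,y)$, $\dot y=x+B(x,y)$, with $A,B$ polynomials having no terms of degree $<2$, the origin $O$ is an isochronous center if there is a punctured neighborhood of $O$ in which every orbit is a closed orbit surrounding $O$ and all these orbits have the same period. Zero Urabe function: write the system as $\dot x=p_0(x)+p_1(x)y$, $\dot y=q_0(x)+q_1(x)y+q_2(x)y^2$ ($p_0(0)=q_0(0)=0$, $p_1(0)\ne0$), where it holds that $-\frac{p_1'p_0}{p_1}+q_1+p_0'-\frac{2q_2p_0}{p_1}\equiv0$. Put $f=-\frac{q_2+p_1'}{p_1}$, $g=-\frac{q_2p_0^2}{p_1}+q_1p_0-p_1q_0$ (the change $z=p_0+p_1y$ gives $\dot x=z$, $\dot z=-g(x)-f(x)z^2$), $F(x)=\int_0^xf$, and $\xi$ near $0$ by $\frac12\xi(x)^2=\int_0^xg(s)e^{2F(s)}ds$, $x\xi(x)>0$ for $x\ne0$. The Urabe function of an isochronous center is the odd analytic $h$ with $\frac{\xi(x)}{1+h(\xi(x))}=g(x)e^{F(x)}$; "zero Urabe function" means $h\equiv0$, i.e. $\xi(x)=g(x)e^{F(x)}$ near $0$. *)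

theory Defs
  imports "HOL-Analysis.Analysis"
begin

text \<open>Planar vector fields are functions real \<times> real \<Rightarrow> real \<times> real; the system is
  x' = fst (V (x,y)), y' = snd (V (x,y)).\<close>

definition oint :: "real \<Rightarrow> real \<Rightarrow> (real \<Rightarrow> real) \<Rightarrow> real" where
  "oint a b h = (if a \<le> b then integral {a..b} h else - integral {b..a} h)"

definition isochronous_center :: "(real \<times> real \<Rightarrow> real \<times> real) \<Rightarrow> bool" where
  "isochronous_center V \<longleftrightarrow>
     (\<exists>U T. open U \<and> (0::real\<times>real) \<in> U \<and> T > 0 \<and>
        (\<forall>p \<in> U - {0}. \<exists>\<phi> :: real \<Rightarrow> real \<times> real.
            \<phi> 0 = p \<and>
            (\<forall>t. (\<phi> has_vector_derivative V (\<phi> t)) (at t)) \<and>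
            (\<forall>t. \<phi> (t + T) = \<phi> t) \<and>
            (\<forall>s. 0 < s \<and> s < T \<longrightarrow> \<phi> s \<noteq> p) \<and>
            0 \<in> inside (range \<phi>)))"

text \<open>Zero Urabe function, following the paper: the system is written as
  x' = p0 x + p1 x * y, y' = q0 x + q1 x * y + q2 x * y^2 with p0 0 = q0 0 = 0, p1 0 \<noteq> 0,
  the compatibility identity holds, and with f, g, F as in the paper the function
  g(x) e^{F(x)} is the function \<xi> near 0 (i.e. satisfies (1/2) \<xi>^2 = \<integral>_0^x g e^{2F} and
  x \<xi>(x) > 0 for x \<noteq> 0), i.e. h \<equiv> 0.\<close>
definition urabe_f :: "(real \<Rightarrow> real) \<Rightarrow> (real \<Rightarrow> real) \<Rightarrow> real \<Rightarrow> real" where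
  "urabe_f p1 q2 x = - (q2 x + deriv p1 x) / p1 x"

definition urabe_g ::
  "(real \<Rightarrow> real) \<Rightarrow> (real \<Rightarrow> real) \<Rightarrow> (real \<Rightarrow> real) \<Rightarrow> (real \<Rightarrow> real) \<Rightarrow> (real \<Rightarrow> real) \<Rightarrow> real \<Rightarrow> real" where
  "urabe_g p0 p1 q0 q1 q2 x = - q2 x * (p0 x)\<^sup>2 / p1 x + q1 x * p0 x - p1 x * q0 x"

definition urabe_F :: "(real \<Rightarrow> real) \<Rightarrow> (real \<Rightarrow> real) \<Rightarrow> real \<Rightarrow> real" where
  "urabe_F p1 q2 x = oint 0 x (urabe_f p1 q2)"

definition zero_urabe_decomp ::
  "(real \<Rightarrow> real) \<Rightarrow> (real \<Rightarrow> real) \<Rightarrow> (real \<Rightarrow> real) \<Rightarrow> (real \<Rightarrow> real) \<Rightarrow> (real \<Rightarrow> real) \<Rightarrow> bool" where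
  "zero_urabe_decomp p0 p1 q0 q1 q2 \<longleftrightarrow>
     p0 0 = 0 \<and> q0 0 = 0 \<and> p1 0 \<noteq> 0 \<and>
     (\<forall>x. p1 x \<noteq> 0 \<longrightarrow>
        - deriv p1 x * p0 x / p1 x + q1 x + deriv p0 x - 2 * q2 x * p0 x / p1 x = 0) \<and>
     (\<exists>\<delta>>0. \<forall>x. \<bar>x\<bar> < \<delta> \<longrightarrow>
        (let g = urabe_g p0 p1 q0 q1 q2; F = urabe_F p1 q2; \<xi> = g x * exp (F x) in
           (1/2) * \<xi>\<^sup>2 = oint 0 x (\<lambda>s. g s * exp (2 * F s)) \<and>
           (x \<noteq> 0 \<longrightarrow> x * \<xi> > 0)))"

text \<open>A polynomial system has zero Urabe function if, written in the form above
  (this decomposition is unique), the conditions hold.\<close>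
definition zero_urabe :: "(real \<times> real \<Rightarrow> real \<times> real) \<Rightarrow> bool" where
  "zero_urabe V \<longleftrightarrow>
     (\<exists>p0 p1 q0 q1 q2 :: real \<Rightarrow> real.
        (\<forall>x y. V (x, y) = (p0 x + p1 x * y, q0 x + q1 x * y + q2 x * y\<^sup>2)) \<and>
        zero_urabe_decomp p0 p1 q0 q1 q2)"

definition "alpha1 = sqrt (-106 + 34 * sqrt 19)"
definition "alpha2 = -10 + 10 * sqrt 19"
definition "alpha3 = 16 - 16 * sqrt 19"
definition "alpha4 = -13 + 3 * sqrt 19"
definition "alpha5 = sqrt (-77798 + 1162 * sqrt 4691)"
definition "alpha6 = -354/5 + 6 * sqrt 4691 / 5"
definition "alpha7 = -2183/35 + 27/35 * sqrt 4691"

end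

theory Submission
  imports Defs
begin

(*
  Writing z = p0(x) + p1(x) y turns the system into x' = z, z' = -g(x) - f(x) z^2.
  The Urabe function vanishes when xi = g e^F satisfies xi' = e^F, i.e. g' + f g = 1;
  then (x, z) |-> (xi(x), z e^F(x)) carries solutions to solutions of the linear centre
  u' = w, w' = -u. As xi is strictly increasing near 0, this change of coordinates is
  invertible near the origin, so every orbit close to O is a homeomorphic image of a
  circle, run through with minimal period 2 pi, and by invariance of domain it surrounds O.

  In all three families x' = p1(x) u and u' = -h(x) + q2(x) u^2 for u = y - x^2. For such
  systems g = p1 h, so g' + f g = 1 becomes the polynomial identity p1 h' - q2 h = 1.
*)

lemma oint_eq_diff_antiderivative:
  fixes H h :: "real \<Rightarrow> real"
  assumes "\<And>t. t \<in> closed_segment 0 x \<Longrightarrow> (H has_real_derivative h t) (at t)"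
  shows "oint 0 x h = H x - H 0"
proof (cases "0 \<le> x")
  case True
  have "(h has_integral H x - H 0) {0..x}"
    using assms True
    by (intro fundamental_theorem_of_calculus)
       (auto simp: closed_segment_eq_real_ivl has_real_derivative_iff_has_vector_derivative[symmetric]
             intro: has_field_derivative_at_within)
  then show ?thesis using True by (simp add: oint_def integral_unique)
next
  case False
  have "(h has_integral H 0 - H x) {x..0}"
    using assms False
    by (intro fundamental_theorem_of_calculus)
       (auto simp: closed_segment_eq_real_ivl has_real_derivative_iff_has_vector_derivative[symmetric]
             intro: has_field_derivative_at_within)
  then show ?thesis using False by (simp add: oint_def integral_unique)
qed

lemma has_real_derivative_oint:
  fixes h :: "real \<Rightarrow> real"
  assumes "continuous_on {a..b} h" "a < 0" "0 < b" "a < x" "x < b"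
  shows "((\<lambda>x. oint 0 x h) has_real_derivative h x) (at x)"
proof -
  define H where "H y = integral {a..y} h" for y
  have H_deriv: "(H has_real_derivative h y) (at y)" if "a < y" "y < b" for y
  proof -
    have "(H has_real_derivative h y) (at y within {a..b})"
      unfolding H_def using assms(1) that by (intro integral_has_real_derivative) auto
    then show ?thesis using that by (simp add: at_within_Icc_at)
  qed
  have oint_eq: "oint 0 y h = H y - H 0" if "a < y" "y < b" for y
  proof (rule oint_eq_diff_antiderivative)
    fix t assume "t \<in> closed_segment 0 y"
    then have "a < t" "t < b"
      using that assms(2,3) by (auto simp: closed_segment_eq_real_ivl split: if_splits)
    then show "(H has_real_derivative h t) (at t)" by (rule H_deriv)
  qed
  have "((\<lambda>y. H y - H 0) has_real_derivative h x) (at x)"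
    using DERIV_diff[OF H_deriv[OF assms(4,5)] DERIV_const] by (simp only: diff_zero)
  then show ?thesis
  proof (rule has_field_derivative_transform_within_open[where S = "{a<..<b}"])
    show "H y - H 0 = oint 0 y h" if "y \<in> {a<..<b}" for y
      using oint_eq that by simp
  qed (use assms(4,5) in auto)
qed

section \<open>Conjugacy to the linear centre\<close>

definition rot_flow :: "real \<Rightarrow> real \<times> real \<Rightarrow> real \<times> real" where
  "rot_flow t v = (fst v * cos t + snd v * sin t, snd v * cos t - fst v * sin t)"

lemma rot_flow_0 [simp]: "rot_flow 0 v = v"
  by (simp add: rot_flow_def)

lemma rot_flow_add_2pi [simp]: "rot_flow (t + 2 * pi) v = rot_flow t v"
  by (simp add: rot_flow_def)

lemma norm_rot_flow [simp]: "norm (rot_flow t v) = norm v"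
proof (cases v)
  case (Pair u w)
  have "(u * cos t + w * sin t)\<^sup>2 + (w * cos t - u * sin t)\<^sup>2 = (u\<^sup>2 + w\<^sup>2) * ((sin t)\<^sup>2 + (cos t)\<^sup>2)"
    by algebra
  then show ?thesis by (simp add: Pair rot_flow_def norm_Pair)
qed

lemma rot_flow_has_derivative:
  "((\<lambda>t. fst (rot_flow t v)) has_real_derivative snd (rot_flow t v)) (at t)"
  "((\<lambda>t. snd (rot_flow t v)) has_real_derivative - fst (rot_flow t v)) (at t)"
  unfolding rot_flow_def by (auto intro!: derivative_eq_intros simp: algebra_simps)

lemma rot_flow_polar: "rot_flow t (r * cos \<alpha>, r * sin \<alpha>) = (r * cos (\<alpha> - t), r * sin (\<alpha> - t))"
  by (simp add: rot_flow_def cos_diff sin_diff algebra_simps)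

lemma pair_polar:
  fixes v :: "real \<times> real"
  obtains \<alpha> where "v = (norm v * cos \<alpha>, norm v * sin \<alpha>)"
proof (cases "v = 0")
  case True
  then show ?thesis using that by (simp add: zero_prod_def)
next
  case False
  obtain u w where v: "v = (u, w)" by fastforce
  have "(u / norm v)\<^sup>2 + (w / norm v)\<^sup>2 = 1"
    using False by (simp add: v zero_prod_def norm_Pair power_divide add_divide_distrib[symmetric])
  then obtain \<alpha> where "u / norm v = cos \<alpha>" "w / norm v = sin \<alpha>"
    using sincos_total_2pi by metis
  then show ?thesis using that False by (simp add: v field_simps)
qed

lemma range_rot_flow: "range (\<lambda>t. rot_flow t v) = sphere 0 (norm v)"
proof
  show "range (\<lambda>t. rot_flow t v) \<subseteq> sphere 0 (norm v)" by auto
  show "sphere 0 (norm v) \<subseteq> range (\<lambda>t. rot_flow t v)"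
  proof
    fix w :: "real \<times> real"
    assume "w \<in> sphere 0 (norm v)"
    define r where "r = norm v"
    obtain \<alpha> where v: "v = (r * cos \<alpha>, r * sin \<alpha>)"
      using pair_polar[of v] r_def by blast
    obtain \<beta> where w: "w = (r * cos \<beta>, r * sin \<beta>)"
      using pair_polar[of w] \<open>w \<in> sphere 0 (norm v)\<close> r_def by auto
    have "rot_flow (\<alpha> - \<beta>) v = (r * cos (\<alpha> - (\<alpha> - \<beta>)), r * sin (\<alpha> - (\<alpha> - \<beta>)))"
      unfolding v by (rule rot_flow_polar)
    also have "\<dots> = w" by (simp add: w)
    finally show "w \<in> range (\<lambda>t. rot_flow t v)" by (metis rangeI)
  qed
qed

lemma rot_flow_neq_self:
  assumes "v \<noteq> 0" "0 < s" "s < 2 * pi"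
  shows "rot_flow s v \<noteq> v"
proof
  assume fixed: "rot_flow s v = v"
  obtain u w where v: "v = (u, w)" by fastforce
  have "(u\<^sup>2 + w\<^sup>2) * cos s = u * (u * cos s + w * sin s) + w * (w * cos s - u * sin s)"
    by algebra
  also have "\<dots> = (u\<^sup>2 + w\<^sup>2) * 1"
    using fixed by (simp add: v rot_flow_def power2_eq_square)
  finally have "(u\<^sup>2 + w\<^sup>2) * cos s = (u\<^sup>2 + w\<^sup>2) * 1" .
  moreover have "u\<^sup>2 + w\<^sup>2 \<noteq> 0"
    using assms(1) by (simp add: v zero_prod_def)
  ultimately have "cos s = 1" by (metis mult_left_cancel)
  then obtain n :: int where n: "s = real_of_int n * 2 * pi" by (auto simp: cos_one_2pi_int)
  with assms(2,3) have "0 < n" "n < 1"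
    by (simp_all add: zero_less_mult_iff)
  then show False by simp
qed

lemma center_image_in_inside_image_sphere:
  fixes h :: "'a::euclidean_space \<Rightarrow> 'a"
  assumes "0 < r" and cont: "continuous_on (cball a r) h" and inj: "inj_on h (cball a r)"
  shows "h a \<in> inside (h ` sphere a r)"
proof -
  let ?A = "h ` ball a r" and ?B = "h ` cball a r" and ?C = "h ` sphere a r"
  have "open ?A"
    using cont inj by (intro invariance_of_domain) (auto elim: continuous_on_subset inj_on_subset)
  have "compact ?B"
    using cont by (rule compact_continuous_image[OF _ compact_cball])
  have "?B = ?A \<union> ?C"
  proof -
    have "cball a r = ball a r \<union> sphere a r" by auto
    then show ?thesis by (simp add: image_Un)
  qed
  have frontier_A: "frontier ?A \<subseteq> ?C"
  proof -
    have "closure ?A \<subseteq> ?B"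
      using \<open>compact ?B\<close> by (intro closure_minimal image_mono ball_subset_cball compact_imp_closed)
    then show ?thesis
      using \<open>open ?A\<close> \<open>?B = ?A \<union> ?C\<close> by (auto simp: frontier_def interior_open)
  qed
  have "h a \<notin> ?C"
    using inj \<open>0 < r\<close> by (auto dest: inj_onD)
  define K where "K = connected_component_set (- ?C) (h a)"
  \<comment> \<open>K cannot leave the open set A, whose frontier lies in C.\<close>
  have "K \<subseteq> ?A"
  proof (rule ccontr)
    assume "\<not> K \<subseteq> ?A"
    have "h a \<in> K" "h a \<in> ?A"
      using \<open>h a \<notin> ?C\<close> \<open>0 < r\<close> by (auto simp: K_def)
    then have "K \<inter> ?A \<noteq> {}" by blast
    moreover have "K - ?A \<noteq> {}"
      using \<open>\<not> K \<subseteq> ?A\<close> by blast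
    ultimately have "K \<inter> frontier ?A \<noteq> {}"
      by (intro connected_Int_frontier) (simp_all add: K_def)
    moreover have "K \<inter> ?C = {}"
      using connected_component_subset by (fastforce simp: K_def)
    ultimately show False using frontier_A by blast
  qed
  then have "bounded K"
    using compact_imp_bounded[OF \<open>compact ?B\<close>] image_mono[OF ball_subset_cball]
    by (metis bounded_subset)
  then show ?thesis
    using \<open>h a \<notin> ?C\<close> by (simp add: inside_def K_def)
qed

lemma orbit_image_surrounds_center:
  fixes \<Psi> :: "real \<times> real \<Rightarrow> real \<times> real"
  assumes "v \<noteq> 0" "cball 0 (norm v) \<subseteq> S" "continuous_on S \<Psi>" "inj_on \<Psi> S"
  shows "\<Psi> 0 \<in> inside (range (\<lambda>t. \<Psi> (rot_flow t v)))"
proof -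
  have "range (\<lambda>t. \<Psi> (rot_flow t v)) = \<Psi> ` sphere 0 (norm v)"
    unfolding range_rot_flow[symmetric] by (simp add: image_image)
  moreover have "\<Psi> 0 \<in> inside (\<Psi> ` sphere 0 (norm v))"
    using assms by (intro center_image_in_inside_image_sphere) (auto elim: continuous_on_subset inj_on_subset)
  ultimately show ?thesis
    by simp
qed

lemma isochronous_center_if_conjugate_to_rotation:
  fixes V \<Psi> :: "real \<times> real \<Rightarrow> real \<times> real"
  assumes "0 < \<rho>" and cont: "continuous_on (ball 0 \<rho>) \<Psi>" and inj: "inj_on \<Psi> (ball 0 \<rho>)"
    and "\<Psi> 0 = 0"
    and orbit: "\<And>v t. v \<in> ball 0 \<rho> \<Longrightarrow>
      ((\<lambda>t. \<Psi> (rot_flow t v)) has_vector_derivative V (\<Psi> (rot_flow t v))) (at t)"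
  shows "isochronous_center V"
  unfolding isochronous_center_def
proof (intro exI[of _ "\<Psi> ` ball 0 \<rho>"] exI[of _ "2 * pi"] conjI ballI)
  show "open (\<Psi> ` ball 0 \<rho>)"
    using cont inj by (rule invariance_of_domain[OF _ open_ball])
  show "0 \<in> \<Psi> ` ball 0 \<rho>"
    using \<open>0 < \<rho>\<close> \<open>\<Psi> 0 = 0\<close> by (metis centre_in_ball image_eqI)
  show "(0::real) < 2 * pi" by simp
  fix p assume p: "p \<in> \<Psi> ` ball 0 \<rho> - {0}"
  then obtain v where v: "v \<in> ball 0 \<rho>" "p = \<Psi> v" by auto
  with p \<open>\<Psi> 0 = 0\<close> have "v \<noteq> 0" by auto
  define \<phi> where "\<phi> t = \<Psi> (rot_flow t v)" for t
  have orbit_in_ball: "rot_flow t v \<in> ball 0 \<rho>" for t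
    using v(1) by simp
  have "\<phi> 0 = p"
    by (simp add: \<phi>_def v(2))
  moreover have "\<forall>t. (\<phi> has_vector_derivative V (\<phi> t)) (at t)"
    unfolding \<phi>_def using v(1) orbit by blast
  moreover have "\<forall>t. \<phi> (t + 2 * pi) = \<phi> t"
    by (simp add: \<phi>_def)
  moreover have "\<forall>s. 0 < s \<and> s < 2 * pi \<longrightarrow> \<phi> s \<noteq> p"
    using inj_onD[OF inj _ orbit_in_ball v(1)] rot_flow_neq_self[OF \<open>v \<noteq> 0\<close>]
    by (auto simp: \<phi>_def v(2))
  moreover have "0 \<in> inside (range \<phi>)"
  proof -
    have "cball 0 (norm v) \<subseteq> ball 0 \<rho>"
      using v(1) by auto
    from orbit_image_surrounds_center[OF \<open>v \<noteq> 0\<close> this cont inj] show ?thesis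
      using \<open>\<Psi> 0 = 0\<close> by (simp add: \<phi>_def)
  qed
  ultimately show "\<exists>\<phi>. \<phi> 0 = p \<and> (\<forall>t. (\<phi> has_vector_derivative V (\<phi> t)) (at t)) \<and>
      (\<forall>t. \<phi> (t + 2 * pi) = \<phi> t) \<and> (\<forall>s. 0 < s \<and> s < 2 * pi \<longrightarrow> \<phi> s \<noteq> p) \<and>
      0 \<in> inside (range \<phi>)"
    by blast
qed

section \<open>Systems with zero Urabe function\<close>

lemma system_solution_from_lienard_solution:
  fixes p0 p1 q0 q1 q2 X Z :: "real \<Rightarrow> real"
  assumes X_deriv: "(X has_real_derivative Z t) (at t)"
    and Z_deriv: "(Z has_real_derivative
          - urabe_g p0 p1 q0 q1 q2 (X t) - urabe_f p1 q2 (X t) * (Z t)\<^sup>2) (at t)"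
    and p0_deriv: "(p0 has_real_derivative p0') (at (X t))"
    and p1_deriv: "(p1 has_real_derivative p1') (at (X t))"
    and "p1 (X t) \<noteq> 0"
    and compatible: "- p1' * p0 (X t) + q1 (X t) * p1 (X t) + p0' * p1 (X t) - 2 * q2 (X t) * p0 (X t) = 0"
  defines "Y \<equiv> \<lambda>t. (Z t - p0 (X t)) / p1 (X t)"
  shows "((\<lambda>t. (X t, Y t)) has_vector_derivative
      (p0 (X t) + p1 (X t) * Y t, q0 (X t) + q1 (X t) * Y t + q2 (X t) * (Y t)\<^sup>2)) (at t)"
proof -
  let ?g = "urabe_g p0 p1 q0 q1 q2 (X t)" and ?f = "urabe_f p1 q2 (X t)"
  have "deriv p1 (X t) = p1'"
    using p1_deriv by (rule DERIV_imp_deriv)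
  then have f: "?f = - (q2 (X t) + p1') / p1 (X t)"
    by (simp add: urabe_f_def)
  have "(Y has_real_derivative
      ((- ?g - ?f * (Z t)\<^sup>2 - p0' * Z t) * p1 (X t) - (Z t - p0 (X t)) * (p1' * Z t)) / (p1 (X t) * p1 (X t))) (at t)"
    unfolding Y_def
    using DERIV_divide[OF DERIV_diff[OF Z_deriv DERIV_chain2[OF p0_deriv X_deriv]]
        DERIV_chain2[OF p1_deriv X_deriv] assms(5)] .
  moreover have "((- ?g - ?f * (Z t)\<^sup>2 - p0' * Z t) * p1 (X t) - (Z t - p0 (X t)) * (p1' * Z t)) / (p1 (X t) * p1 (X t))
      = q0 (X t) + q1 (X t) * Y t + q2 (X t) * (Y t)\<^sup>2"
    using assms(5) compatible unfolding f Y_def urabe_g_def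
    by (simp add: field_simps power2_eq_square) algebra
  moreover have "Z t = p0 (X t) + p1 (X t) * Y t"
    using assms(5) by (simp add: Y_def)
  ultimately show ?thesis
    using X_deriv by (auto intro!: has_vector_derivative_Pair simp: has_real_derivative_iff_has_vector_derivative)
qed

locale urabe_system =
  fixes p0 p1 q0 q1 q2 dp0 dp1 :: "real \<Rightarrow> real"
  assumes p0_deriv: "\<And>x. (p0 has_real_derivative dp0 x) (at x)"
    and p1_deriv: "\<And>x. (p1 has_real_derivative dp1 x) (at x)"
    and isCont_dp1: "\<And>x. isCont dp1 x"
    and isCont_q2: "\<And>x. isCont q2 x"
    and p0_0: "p0 0 = 0" and q0_0: "q0 0 = 0" and p1_0: "p1 0 \<noteq> 0"
    and compatible: "\<And>x. - dp1 x * p0 x + q1 x * p1 x + dp0 x * p1 x - 2 * q2 x * p0 x = 0"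
    and isochronicity: "\<And>x. p1 x \<noteq> 0 \<Longrightarrow> (urabe_g p0 p1 q0 q1 q2 has_real_derivative
      1 - urabe_f p1 q2 x * urabe_g p0 p1 q0 q1 q2 x) (at x)"
begin

abbreviation "f \<equiv> urabe_f p1 q2"
abbreviation "g \<equiv> urabe_g p0 p1 q0 q1 q2"
abbreviation "F \<equiv> urabe_F p1 q2"

definition V :: "real \<times> real \<Rightarrow> real \<times> real" where
  "V = (\<lambda>(x, y). (p0 x + p1 x * y, q0 x + q1 x * y + q2 x * y\<^sup>2))"

lemma deriv_p0: "deriv p0 x = dp0 x"
  using p0_deriv by (rule DERIV_imp_deriv)

lemma deriv_p1: "deriv p1 x = dp1 x"
  using p1_deriv by (rule DERIV_imp_deriv)

lemma isCont_p0: "isCont p0 x"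
  using p0_deriv by (rule DERIV_isCont)

lemma isCont_p1: "isCont p1 x"
  using p1_deriv by (rule DERIV_isCont)

lemma g_0: "g 0 = 0"
  by (simp add: urabe_g_def p0_0 q0_0)

end

locale urabe_system_near_origin = urabe_system +
  fixes d :: real
  assumes d_pos: "0 < d" and p1_nonzero: "\<And>x. \<bar>x\<bar> \<le> d \<Longrightarrow> p1 x \<noteq> 0"
begin

lemma continuous_on_f: "continuous_on {-d..d} f"
proof -
  have "continuous_on {-d..d} (\<lambda>x. - (q2 x + dp1 x) / p1 x)"
    using p1_nonzero
    by (intro continuous_intros continuous_at_imp_continuous_on ballI isCont_p1 isCont_q2 isCont_dp1)
       auto
  then show ?thesis
    by (simp add: urabe_f_def deriv_p1)
qed

lemma F_deriv: "\<bar>x\<bar> < d \<Longrightarrow> (F has_real_derivative f x) (at x)"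
  unfolding urabe_F_def using d_pos
  by (intro has_real_derivative_oint[OF continuous_on_f]) auto

lemma isCont_F: "\<bar>x\<bar> < d \<Longrightarrow> isCont F x"
  by (rule DERIV_isCont[OF F_deriv])

lemma F_0: "F 0 = 0"
  by (simp add: urabe_F_def oint_def)

definition xi :: "real \<Rightarrow> real" where
  "xi x = g x * exp (F x)"

lemma xi_deriv:
  assumes "\<bar>x\<bar> < d"
  shows "(xi has_real_derivative exp (F x)) (at x)"
proof -
  have "p1 x \<noteq> 0"
    using assms p1_nonzero by simp
  then have "(xi has_real_derivative (1 - f x * g x) * exp (F x) + exp (F x) * f x * g x) (at x)"
    unfolding xi_def[abs_def]
    by (intro DERIV_mult isochronicity DERIV_chain2[OF DERIV_exp F_deriv[OF assms]])
  then show ?thesis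
    by (simp add: algebra_simps)
qed

lemma xi_0: "xi 0 = 0"
  by (simp add: xi_def g_0)

lemma strict_mono_xi: "strict_mono_on {-d<..<d} xi"
proof (rule strict_mono_onI)
  fix x y assume "x \<in> {-d<..<d}" "y \<in> {-d<..<d}" "x < y"
  then show "xi x < xi y"
    by (intro DERIV_pos_imp_increasing[OF \<open>x < y\<close>]) (auto intro!: exI xi_deriv)
qed

lemma xi_sign: "\<bar>x\<bar> < d \<Longrightarrow> x \<noteq> 0 \<Longrightarrow> x * xi x > 0"
  using strict_mono_onD[OF strict_mono_xi, of x 0] strict_mono_onD[OF strict_mono_xi, of 0 x] d_pos
  by (cases "x > 0") (auto simp: xi_0 zero_less_mult_iff)

lemma half_xi_square:
  assumes "\<bar>x\<bar> < d"
  shows "(1/2) * (xi x)\<^sup>2 = oint 0 x (\<lambda>s. g s * exp (2 * F s))"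
proof -
  have "oint 0 x (\<lambda>s. g s * exp (2 * F s)) = (1/2) * (xi x)\<^sup>2 - (1/2) * (xi 0)\<^sup>2"
  proof (rule oint_eq_diff_antiderivative)
    fix t assume "t \<in> closed_segment 0 x"
    then have "\<bar>t\<bar> < d"
      using assms by (auto simp: closed_segment_eq_real_ivl split: if_splits)
    then have "((\<lambda>t. (1/2) * (xi t * xi t)) has_real_derivative
        (1/2) * (exp (F t) * xi t + exp (F t) * xi t)) (at t)"
      by (intro DERIV_cmult DERIV_mult xi_deriv)
    moreover have "(1/2) * (exp (F t) * xi t + exp (F t) * xi t) = g t * exp (2 * F t)"
      by (simp add: xi_def exp_add[symmetric])
    ultimately show "((\<lambda>t. (1/2) * (xi t)\<^sup>2) has_real_derivative g t * exp (2 * F t)) (at t)"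
      by (simp add: power2_eq_square)
  qed
  then show ?thesis
    by (simp add: xi_0)
qed

lemma zero_urabe_V: "zero_urabe V"
  unfolding zero_urabe_def
proof (intro exI conjI)
  show "\<forall>x y. V (x, y) = (p0 x + p1 x * y, q0 x + q1 x * y + q2 x * y\<^sup>2)"
    by (simp add: V_def)
  show "zero_urabe_decomp p0 p1 q0 q1 q2"
    unfolding zero_urabe_decomp_def Let_def xi_def[symmetric]
  proof (intro conjI allI impI exI[of _ d])
    fix x assume "p1 x \<noteq> 0"
    then show "- deriv p1 x * p0 x / p1 x + q1 x + deriv p0 x - 2 * q2 x * p0 x / p1 x = 0"
      using compatible[of x] by (simp add: deriv_p0 deriv_p1 field_simps)
  qed (use p0_0 q0_0 p1_0 d_pos half_xi_square xi_sign in auto)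
qed

definition xi_range :: "real set" where
  "xi_range = xi ` {-d<..<d}"

definition xi_inv :: "real \<Rightarrow> real" where
  "xi_inv = inv_into {-d<..<d} xi"

lemma continuous_on_xi: "continuous_on {-d<..<d} xi"
  by (intro continuous_at_imp_continuous_on ballI DERIV_isCont[OF xi_deriv]) auto

lemma open_xi_range: "open xi_range"
  unfolding xi_range_def
  using continuous_on_xi strict_mono_on_imp_inj_on[OF strict_mono_xi]
  by (rule invariance_of_domain[OF _ open_greaterThanLessThan])

lemma zero_in_xi_range: "0 \<in> xi_range"
  unfolding xi_range_def using d_pos xi_0 by force

lemma xi_inv_bound: "u \<in> xi_range \<Longrightarrow> \<bar>xi_inv u\<bar> < d"
  unfolding xi_range_def xi_inv_def using inv_into_into[of u xi "{-d<..<d}"] by auto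

lemma xi_xi_inv: "u \<in> xi_range \<Longrightarrow> xi (xi_inv u) = u"
  unfolding xi_range_def xi_inv_def by (rule f_inv_into_f)

lemma xi_inv_xi: "\<bar>x\<bar> < d \<Longrightarrow> xi_inv (xi x) = x"
  unfolding xi_inv_def using strict_mono_on_imp_inj_on[OF strict_mono_xi]
  by (intro inv_into_f_f) auto

lemma isCont_xi_inv:
  assumes "u \<in> xi_range"
  shows "isCont xi_inv u"
proof -
  have "continuous_on xi_range xi_inv"
    unfolding xi_range_def using continuous_on_xi
    by (rule continuous_on_inverse_open[OF open_greaterThanLessThan]) (auto intro: xi_inv_xi)
  then show ?thesis
    using open_xi_range assms by (simp add: continuous_on_eq_continuous_at)
qed

lemma xi_inv_deriv:
  assumes "u \<in> xi_range"
  shows "(xi_inv has_real_derivative exp (- F (xi_inv u))) (at u)"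
proof -
  have "(xi_inv has_real_derivative inverse (exp (F (xi_inv u)))) (at u)"
    using xi_deriv[OF xi_inv_bound[OF assms]] _ isCont_xi_inv[OF assms] open_xi_range assms xi_xi_inv
    by (rule has_field_derivative_inverse_basic) simp_all
  then show ?thesis
    by (simp add: exp_minus)
qed

lemma lienard_solution_from_rotation:
  fixes U W :: "real \<Rightarrow> real"
  assumes U_deriv: "(U has_real_derivative W t) (at t)"
    and W_deriv: "(W has_real_derivative - U t) (at t)"
    and "U t \<in> xi_range"
  defines "X \<equiv> \<lambda>t. xi_inv (U t)" and "Z \<equiv> \<lambda>t. W t * exp (- F (xi_inv (U t)))"
  shows "(X has_real_derivative Z t) (at t)"
    and "(Z has_real_derivative - g (X t) - f (X t) * (Z t)\<^sup>2) (at t)"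
proof -
  show X_deriv: "(X has_real_derivative Z t) (at t)"
    unfolding X_def Z_def
    using DERIV_chain2[OF xi_inv_deriv[OF \<open>U t \<in> xi_range\<close>] U_deriv] by (simp add: mult.commute)
  have "\<bar>X t\<bar> < d"
    unfolding X_def using \<open>U t \<in> xi_range\<close> by (rule xi_inv_bound)
  have "((\<lambda>t. exp (- F (X t))) has_real_derivative exp (- F (X t)) * - (f (X t) * Z t)) (at t)"
    by (rule DERIV_chain2[OF DERIV_exp DERIV_minus[OF DERIV_chain2[OF F_deriv[OF \<open>\<bar>X t\<bar> < d\<close>] X_deriv]]])
  from DERIV_mult[OF W_deriv this]
  have "(Z has_real_derivative - U t * exp (- F (X t)) + exp (- F (X t)) * - (f (X t) * Z t) * W t) (at t)"
    by (simp add: Z_def X_def)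
  moreover have "U t * exp (- F (X t)) = g (X t)"
    using xi_xi_inv[OF \<open>U t \<in> xi_range\<close>] by (simp add: X_def xi_def exp_minus field_simps)
  ultimately show "(Z has_real_derivative - g (X t) - f (X t) * (Z t)\<^sup>2) (at t)"
    by (simp add: Z_def X_def power2_eq_square algebra_simps)
qed

text \<open>The inverse of (x, y) \<mapsto> (xi x, (p0 x + p1 x * y) * exp (F x)).\<close>

definition \<Psi> :: "real \<times> real \<Rightarrow> real \<times> real" where
  "\<Psi> v = (let x = xi_inv (fst v) in (x, (snd v * exp (- F x) - p0 x) / p1 x))"

lemma \<Psi>_0: "\<Psi> 0 = 0"
proof -
  have "xi_inv 0 = 0"
    using xi_inv_xi[of 0] d_pos by (simp add: xi_0)
  then show ?thesis
    by (simp add: \<Psi>_def F_0 p0_0 zero_prod_def)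
qed

lemma continuous_on_\<Psi>: "continuous_on (xi_range \<times> UNIV) \<Psi>"
proof (rule continuous_at_imp_continuous_on, rule ballI)
  fix v :: "real \<times> real"
  assume "v \<in> xi_range \<times> UNIV"
  then have "fst v \<in> xi_range" by auto
  then have x: "\<bar>xi_inv (fst v)\<bar> < d" by (rule xi_inv_bound)
  have cont_x: "isCont (\<lambda>v. xi_inv (fst v)) v"
    by (rule isCont_o2[OF isCont_fst[OF continuous_ident] isCont_xi_inv[OF \<open>fst v \<in> xi_range\<close>]])
  have cont_comp: "isCont (\<lambda>v. h (xi_inv (fst v))) v" if "isCont h (xi_inv (fst v))" for h :: "real \<Rightarrow> real"
    by (rule isCont_o2[OF cont_x that])
  show "isCont \<Psi> v"
    unfolding \<Psi>_def Let_def using x p1_nonzero[of "xi_inv (fst v)"]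
    by (intro continuous_intros cont_x cont_comp isCont_F isCont_p0 isCont_p1) auto
qed

lemma inj_on_\<Psi>: "inj_on \<Psi> (xi_range \<times> UNIV)"
proof (rule inj_onI)
  fix v v' assume "v \<in> xi_range \<times> UNIV" "v' \<in> xi_range \<times> UNIV" and eq: "\<Psi> v = \<Psi> v'"
  then have "xi_inv (fst v) = xi_inv (fst v')"
    by (simp add: \<Psi>_def Let_def)
  then have fst_eq: "fst v = fst v'"
    using xi_xi_inv \<open>v \<in> xi_range \<times> UNIV\<close> \<open>v' \<in> xi_range \<times> UNIV\<close> by (metis mem_Times_iff)
  define x where "x = xi_inv (fst v)"
  have "\<bar>x\<bar> < d"
    unfolding x_def using \<open>v \<in> xi_range \<times> UNIV\<close> by (auto intro: xi_inv_bound)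
  then have "p1 x \<noteq> 0"
    using p1_nonzero by simp
  moreover have "(snd v * exp (- F x) - p0 x) / p1 x = (snd v' * exp (- F x) - p0 x) / p1 x"
    using eq by (simp add: \<Psi>_def Let_def x_def fst_eq)
  ultimately have "snd v = snd v'"
    by (simp add: divide_cancel_right)
  with fst_eq show "v = v'"
    by (simp add: prod_eq_iff)
qed

lemma \<Psi>_rot_flow_solution:
  assumes "fst (rot_flow t v) \<in> xi_range"
  shows "((\<lambda>t. \<Psi> (rot_flow t v)) has_vector_derivative V (\<Psi> (rot_flow t v))) (at t)"
proof -
  define U where "U = (\<lambda>t. fst (rot_flow t v))"
  define W where "W = (\<lambda>t. snd (rot_flow t v))"
  define X where "X = (\<lambda>t. xi_inv (U t))"
  define Z where "Z = (\<lambda>t. W t * exp (- F (xi_inv (U t))))"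
  have "U t \<in> xi_range"
    using assms by (simp add: U_def)
  have U_deriv: "(U has_real_derivative W t) (at t)" and W_deriv: "(W has_real_derivative - U t) (at t)"
    unfolding U_def W_def by (fact rot_flow_has_derivative)+
  have "\<bar>X t\<bar> < d"
    unfolding X_def using \<open>U t \<in> xi_range\<close> by (rule xi_inv_bound)
  then have "p1 (X t) \<noteq> 0"
    using p1_nonzero by simp
  have "(X has_real_derivative Z t) (at t)"
    and "(Z has_real_derivative - g (X t) - f (X t) * (Z t)\<^sup>2) (at t)"
    using lienard_solution_from_rotation[OF U_deriv W_deriv \<open>U t \<in> xi_range\<close>]
    by (simp_all add: X_def Z_def)
  then have "((\<lambda>t. (X t, (Z t - p0 (X t)) / p1 (X t))) has_vector_derivative
      V (X t, (Z t - p0 (X t)) / p1 (X t))) (at t)"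
    unfolding V_def prod.case
    by (rule system_solution_from_lienard_solution[where p0' = "dp0 (X t)" and p1' = "dp1 (X t)"])
       (rule p0_deriv p1_deriv \<open>p1 (X t) \<noteq> 0\<close> compatible)+
  moreover have "\<Psi> (rot_flow t v) = (X t, (Z t - p0 (X t)) / p1 (X t))" for t
    by (simp add: \<Psi>_def Let_def X_def Z_def U_def W_def)
  ultimately show ?thesis
    by simp
qed

lemma isochronous_center_V: "isochronous_center V"
proof -
  obtain \<rho> where "0 < \<rho>" and ball_xi_range: "ball 0 \<rho> \<subseteq> xi_range"
    using open_xi_range zero_in_xi_range by (rule openE)
  have ball_sub: "ball (0 :: real \<times> real) \<rho> \<subseteq> xi_range \<times> UNIV"
  proof
    fix v :: "real \<times> real"
    assume "v \<in> ball 0 \<rho>"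
    moreover have "norm (fst v) \<le> norm v"
      using norm_fst_le[of "fst v" "snd v"] by simp
    ultimately have "fst v \<in> xi_range"
      using ball_xi_range by auto
    then show "v \<in> xi_range \<times> UNIV"
      by (simp add: mem_Times_iff)
  qed
  show ?thesis
  proof (rule isochronous_center_if_conjugate_to_rotation[OF \<open>0 < \<rho>\<close>])
    show "continuous_on (ball 0 \<rho>) \<Psi>"
      using continuous_on_\<Psi> ball_sub by (rule continuous_on_subset)
    show "inj_on \<Psi> (ball 0 \<rho>)"
      using inj_on_\<Psi> ball_sub by (rule inj_on_subset)
    show "((\<lambda>t. \<Psi> (rot_flow t v)) has_vector_derivative V (\<Psi> (rot_flow t v))) (at t)"
      if "v \<in> ball 0 \<rho>" for v t
      using that subsetD[OF ball_sub, of "rot_flow t v"]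
      by (intro \<Psi>_rot_flow_solution) (simp add: mem_Times_iff)
  qed (fact \<Psi>_0)
qed

end

theorem (in urabe_system) isochronous_center_zero_urabe: "isochronous_center V \<and> zero_urabe V"
proof -
  obtain e where "0 < e" and e: "\<And>y. dist 0 y < e \<Longrightarrow> p1 y \<noteq> 0"
    using continuous_at_avoid[OF isCont_p1 p1_0] by blast
  interpret urabe_system_near_origin p0 p1 q0 q1 q2 dp0 dp1 "e/2"
    by unfold_locales (use \<open>0 < e\<close> e in auto)
  show ?thesis
    using isochronous_center_V zero_urabe_V by simp
qed

section \<open>The three families\<close>

text \<open>This holds also where p1 x = 0, since x / 0 = 0.\<close>

lemma urabe_g_reduced_system:
  "urabe_g (\<lambda>x. - x\<^sup>2 * p1 x) p1 (\<lambda>x. x ^ 4 * q2 x - 2 * x ^ 3 * p1 x - h x)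
     (\<lambda>x. 2 * x * p1 x - 2 * x\<^sup>2 * q2 x) q2 = (\<lambda>x. p1 x * h x)"
proof
  fix x
  show "urabe_g (\<lambda>x. - x\<^sup>2 * p1 x) p1 (\<lambda>x. x ^ 4 * q2 x - 2 * x ^ 3 * p1 x - h x)
      (\<lambda>x. 2 * x * p1 x - 2 * x\<^sup>2 * q2 x) q2 x = p1 x * h x"
  proof (cases "p1 x = 0")
    case False
    then show ?thesis
      unfolding urabe_g_def by (simp add: field_simps power2_eq_square) algebra
  qed (simp add: urabe_g_def)
qed

lemma reduced_system_isochronous_center_zero_urabe:
  fixes p1 q2 h dp1 dh :: "real \<Rightarrow> real"
  assumes p1_deriv: "\<And>x. (p1 has_real_derivative dp1 x) (at x)"
    and h_deriv: "\<And>x. (h has_real_derivative dh x) (at x)"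
    and "\<And>x. isCont dp1 x" and "\<And>x. isCont q2 x" and "h 0 = 0"
    and isochronicity: "\<And>x. p1 x * dh x - q2 x * h x = 1"
    and V: "\<And>x y. V (x, y) = (p1 x * (y - x\<^sup>2), - h x + 2 * x * p1 x * (y - x\<^sup>2) + q2 x * (y - x\<^sup>2)\<^sup>2)"
  shows "isochronous_center V \<and> zero_urabe V"
proof -
  define p0 where "p0 x = - x\<^sup>2 * p1 x" for x
  define dp0 where "dp0 x = - 2 * x * p1 x - x\<^sup>2 * dp1 x" for x
  define q0 where "q0 x = x ^ 4 * q2 x - 2 * x ^ 3 * p1 x - h x" for x
  define q1 where "q1 x = 2 * x * p1 x - 2 * x\<^sup>2 * q2 x" for x
  have g: "urabe_g p0 p1 q0 q1 q2 = (\<lambda>x. p1 x * h x)"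
    unfolding p0_def q0_def q1_def by (rule urabe_g_reduced_system)
  interpret S: urabe_system p0 p1 q0 q1 q2 dp0 dp1
  proof
    show "(p0 has_real_derivative dp0 x) (at x)" for x
      unfolding p0_def[abs_def] dp0_def by (auto intro!: derivative_eq_intros p1_deriv)
    show "- dp1 x * p0 x + q1 x * p1 x + dp0 x * p1 x - 2 * q2 x * p0 x = 0" for x
      unfolding p0_def q1_def dp0_def by algebra
    show "p1 0 \<noteq> 0"
      using isochronicity[of 0] \<open>h 0 = 0\<close> by auto
    show "(urabe_g p0 p1 q0 q1 q2 has_real_derivative
        1 - urabe_f p1 q2 x * urabe_g p0 p1 q0 q1 q2 x) (at x)" if "p1 x \<noteq> 0" for x
    proof -
      have "deriv p1 x = dp1 x"
        using p1_deriv by (rule DERIV_imp_deriv)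
      then have "1 - urabe_f p1 q2 x * urabe_g p0 p1 q0 q1 q2 x = dp1 x * h x + dh x * p1 x"
        using isochronicity[of x] that by (simp add: g urabe_f_def field_simps)
      moreover have "((\<lambda>x. p1 x * h x) has_real_derivative dp1 x * h x + dh x * p1 x) (at x)"
        by (rule DERIV_mult[OF p1_deriv h_deriv])
      ultimately show ?thesis
        by (simp add: g)
    qed
  qed (use assms in \<open>simp_all add: p0_def q0_def\<close>)
  have "V = S.V"
    unfolding S.V_def p0_def q0_def q1_def by (auto simp: fun_eq_iff V) algebra+
  then show ?thesis
    using S.isochronous_center_zero_urabe by simp
qed

lemma family_i_isochronous_center_zero_urabe:
  fixes \<sigma> :: real and V :: "real \<times> real \<Rightarrow> real \<times> real"
  assumes "\<sigma> \<in> {1, -1}"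
    and V: "\<And>x y. V (x, y) =
      (- y + (-2 + 2 * sqrt 19) * x^2 * y + x^2 - (-2 + 2 * sqrt 19) * x^4,
       x + \<sigma> * alpha1 * y^2 - 2 * x * y - \<sigma> * (alpha1 / 2) * x^2 + alpha2 * x * y^2
         - \<sigma> * 2 * alpha1 * x^2 * y + alpha4 * x^3 + alpha3 * x^3 * y + \<sigma> * 4 * alpha1 * x^4)"
  shows "isochronous_center V \<and> zero_urabe V"
proof -
  define s where "s = sqrt 19"
  define b where "b = \<sigma> * alpha1"
  define k where "k = -2 + 2 * s"
  have s_square: "s\<^sup>2 - 19 = 0"
    by (simp add: s_def)
  have "(4::real) \<le> sqrt 19"
    by (rule real_le_rsqrt) simp
  then have "alpha1\<^sup>2 = -106 + 34 * s"
    by (simp add: alpha1_def s_def)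
  then have b_square: "b\<^sup>2 + 106 - 34 * s = 0"
    using assms(1) by (auto simp: b_def power_mult_distrib)
  define p1 where "p1 x = -1 + k * x^2" for x :: real
  define q2 where "q2 x = b + alpha2 * x" for x :: real
  define h where "h x = - x + b/2 * x^2 + (2 - alpha4) * x^3 - 3 * b * x^4 + (alpha2 - 2 * k) * x^5"
    for x :: real
  show ?thesis
  proof (rule reduced_system_isochronous_center_zero_urabe)
    show "(p1 has_real_derivative 2 * k * x) (at x)" for x
      unfolding p1_def[abs_def] by (auto intro!: derivative_eq_intros)
    show "(h has_real_derivative
        -1 + b * x + 3 * (2 - alpha4) * x^2 - 12 * b * x^3 + 5 * (alpha2 - 2 * k) * x^4) (at x)" for x
      unfolding h_def[abs_def] by (auto intro!: derivative_eq_intros simp: algebra_simps)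
    show "p1 x * (-1 + b * x + 3 * (2 - alpha4) * x^2 - 12 * b * x^3 + 5 * (alpha2 - 2 * k) * x^4)
        - q2 x * h x = 1" for x
      unfolding p1_def q2_def h_def k_def alpha2_def alpha4_def s_def[symmetric]
      using s_square b_square by algebra
    show "V (x, y) = (p1 x * (y - x\<^sup>2), - h x + 2 * x * p1 x * (y - x\<^sup>2) + q2 x * (y - x\<^sup>2)\<^sup>2)" for x y
      unfolding V p1_def q2_def h_def k_def b_def s_def alpha2_def alpha3_def alpha4_def prod.inject
      by (intro conjI) algebra+
  qed (auto simp: q2_def h_def intro!: continuous_intros)
qed

lemma family_ii_isochronous_center_zero_urabe:
  fixes a :: real and V :: "real \<times> real \<Rightarrow> real \<times> real"
  assumes V: "\<And>x y. V (x, y) =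
      (- y + a * x * y + 15/8 * a^2 * x^2 * y + x^2 - a * x^3 - 15/8 * a^2 * x^4,
       x - a/2 * y^2 - 2 * x * y + 3 * a / 4 * x^2 + 15/4 * a^2 * x * y^2 + 3 * a * x^2 * y
         + 2 * x^3 - 15/4 * a^2 * x^3 * y - 5 * a / 2 * x^4)"
  shows "isochronous_center V \<and> zero_urabe V"
proof -
  define p1 where "p1 x = -1 + a * x + 15/8 * a^2 * x^2" for x :: real
  define q2 where "q2 x = - a/2 + 15/4 * a^2 * x" for x :: real
  define h where "h x = - x - 3/4 * a * x^2" for x :: real
  show ?thesis
  proof (rule reduced_system_isochronous_center_zero_urabe)
    show "(p1 has_real_derivative a + 15/4 * a^2 * x) (at x)" for x
      unfolding p1_def[abs_def] by (auto intro!: derivative_eq_intros)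
    show "(h has_real_derivative - 1 - 3/2 * a * x) (at x)" for x
      unfolding h_def[abs_def] by (auto intro!: derivative_eq_intros)
    show "p1 x * (- 1 - 3/2 * a * x) - q2 x * h x = 1" for x
      unfolding p1_def q2_def h_def by algebra
    show "V (x, y) = (p1 x * (y - x\<^sup>2), - h x + 2 * x * p1 x * (y - x\<^sup>2) + q2 x * (y - x\<^sup>2)\<^sup>2)" for x y
      unfolding V p1_def q2_def h_def prod.inject by (intro conjI) algebra+
  qed (auto simp: q2_def h_def intro!: continuous_intros)
qed

lemma family_iii_isochronous_center_zero_urabe:
  fixes \<sigma> :: real and V :: "real \<times> real \<Rightarrow> real \<times> real"
  assumes "\<sigma> \<in> {1, -1}"
    and V: "\<And>x y. V (x, y) =
      (- y - \<sigma> * (2/35) * alpha5 * x * y + alpha6 * x^2 * y + x^2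
         + \<sigma> * (2/35) * alpha5 * x^3 - alpha6 * x^4,
       x + \<sigma> * (alpha5 / 35) * y^2 - 2 * x * y - \<sigma> * (3/70) * alpha5 * x^2
         + 5 * alpha6 * x * y^2 - \<sigma> * (6/35) * alpha5 * x^2 * y + alpha7 * x^3
         - 8 * alpha6 * x^3 * y + \<sigma> * (38/35) * alpha5 * x^4)"
  shows "isochronous_center V \<and> zero_urabe V"
proof -
  define s where "s = sqrt 4691"
  define b where "b = \<sigma> * alpha5"
  have s_square: "s\<^sup>2 - 4691 = 0"
    by (simp add: s_def)
  have "(67::real) \<le> sqrt 4691"
    by (rule real_le_rsqrt) simp
  then have "alpha5\<^sup>2 = -77798 + 1162 * s"
    by (simp add: alpha5_def s_def)
  then have b_square: "b\<^sup>2 + 77798 - 1162 * s = 0"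
    using assms(1) by (auto simp: b_def power_mult_distrib)
  define p1 where "p1 x = -1 - 2/35 * b * x + alpha6 * x^2" for x :: real
  define q2 where "q2 x = b / 35 + 5 * alpha6 * x" for x :: real
  define h where "h x = - x + 3/70 * b * x^2 + (2 - alpha7) * x^3 - 33/35 * b * x^4 + 3 * alpha6 * x^5"
    for x :: real
  show ?thesis
  proof (rule reduced_system_isochronous_center_zero_urabe)
    show "(p1 has_real_derivative - 2/35 * b + 2 * alpha6 * x) (at x)" for x
      unfolding p1_def[abs_def] by (auto intro!: derivative_eq_intros)
    show "(h has_real_derivative
        -1 + 3/35 * b * x + 3 * (2 - alpha7) * x^2 - 132/35 * b * x^3 + 15 * alpha6 * x^4) (at x)" for x
      unfolding h_def[abs_def] by (auto intro!: derivative_eq_intros simp: algebra_simps)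
    show "p1 x * (-1 + 3/35 * b * x + 3 * (2 - alpha7) * x^2 - 132/35 * b * x^3 + 15 * alpha6 * x^4)
        - q2 x * h x = 1" for x
      unfolding p1_def q2_def h_def alpha6_def alpha7_def s_def[symmetric]
      using s_square b_square by algebra
    show "V (x, y) = (p1 x * (y - x\<^sup>2), - h x + 2 * x * p1 x * (y - x\<^sup>2) + q2 x * (y - x\<^sup>2)\<^sup>2)" for x y
      unfolding V p1_def q2_def h_def b_def prod.inject
      by (intro conjI; simp add: field_simps power2_eq_square; algebra)
  qed (auto simp: q2_def h_def intro!: continuous_intros)
qed

theorem theorem4p2:
  shows
   "(\<forall>\<sigma>::real \<in> {1, -1}.
      let V = (\<lambda>(x::real, y::real).
        (- y + (-2 + 2 * sqrt 19) * x^2 * y + x^2 - (-2 + 2 * sqrt 19) * x^4,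
         x + \<sigma> * alpha1 * y^2 - 2 * x * y - \<sigma> * (alpha1 / 2) * x^2 + alpha2 * x * y^2
           - \<sigma> * 2 * alpha1 * x^2 * y + alpha4 * x^3 + alpha3 * x^3 * y
           + \<sigma> * 4 * alpha1 * x^4))
      in isochronous_center V \<and> zero_urabe V)
  \<and> (\<forall>a::real.
      let V = (\<lambda>(x::real, y::real).
        (- y + a * x * y + 15/8 * a^2 * x^2 * y + x^2 - a * x^3 - 15/8 * a^2 * x^4,
         x - a/2 * y^2 - 2 * x * y + 3 * a / 4 * x^2 + 15/4 * a^2 * x * y^2 + 3 * a * x^2 * y
           + 2 * x^3 - 15/4 * a^2 * x^3 * y - 5 * a / 2 * x^4))
      in isochronous_center V \<and> zero_urabe V)
  \<and> (\<forall>\<sigma>::real \<in> {1, -1}.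
      let V = (\<lambda>(x::real, y::real).
        (- y - \<sigma> * (2/35) * alpha5 * x * y + alpha6 * x^2 * y + x^2
           + \<sigma> * (2/35) * alpha5 * x^3 - alpha6 * x^4,
         x + \<sigma> * (alpha5 / 35) * y^2 - 2 * x * y - \<sigma> * (3/70) * alpha5 * x^2
           + 5 * alpha6 * x * y^2 - \<sigma> * (6/35) * alpha5 * x^2 * y + alpha7 * x^3
           - 8 * alpha6 * x^3 * y + \<sigma> * (38/35) * alpha5 * x^4))
      in isochronous_center V \<and> zero_urabe V)"
  unfolding Let_def
  by (intro conjI ballI allI family_i_isochronous_center_zero_urabe
      family_ii_isochronous_center_zero_urabe family_iii_isochronous_center_zero_urabe) simp_all

end
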